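(* Let $m\ge2$ and let $\mathfrak{h}_m$ be the Lie subalgebra of $\Lambda(\mathbb{Q}\mathrm{Tree}_2^-)$ generated by $\bigcup_{j=2}^m\mathrm{Tree}_2((j))$. Then the subspace $\mathbb{Q}\mathrm{Tree}_2^-((0))\oplus\mathbb{Q}\mathrm{Tree}_2^-((1))\oplus\mathfrak{h}_m$ is a Lie subalgebra of $\Lambda(\mathbb{Q}\mathrm{Tree}_2^-)$.
   Context: $\mathrm{Tree}_2((m))$, $m\ge1$, is the set of planar binary rooted trees with one root and $m$ leaves labeled $1,\dots,m$ from left to right, equivalently full parenthesizations of $12\cdots m$; $\mathrm{Tree}_2((1))=\{1\}$, $\mathrm{Tree}_2((2))=\{(12)\}$. Composition $S\circ_iT$ grafts the root of $T$ onto the $i$-th leaf of $S$. For $c\in\mathrm{Tree}_2((m))$, $m\ge2$, $\partial_ic\in\mathrm{Tree}_2((m-1))$ is obtained by erasing the $i$-th leaf (suppressing the resulting one-input vertex). The operad $\mathrm{Tree}_2^-$ has $\mathrm{Tree}_2^-((0))=\{\circ\}$, $\mathrm{Tree}_2^-((m))=\mathrm{Tree}_2((m))$ for $m\ge1$, grafting compositions, and $c\circ_i\circ=\partial_ic$, $1\circ_1\circ=\circ$. $\Lambda(\mathbb{Q}\mathrm{Tree}_2^-)=\bigoplus_{m\ge0}\mathbb{Q}\mathrm{Tree}_2^-((m))$ with Lie bracket $[c,d]=\sum_{t=1}^{j}d\circ_tc-\sum_{s=1}^{k}c\circ_sd$ for $c$ of arity $k$, $d$ of arity $j$. *)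

theory Defs
  imports Complex_Main "HOL-Library.Function_Algebras"
begin

text \<open>Planar binary rooted trees with leaves labelled 1..m from left to right.\<close>
datatype tree = Lf | Nd tree tree

fun leaves :: "tree \<Rightarrow> nat" where
  "leaves Lf = 1"
| "leaves (Nd l r) = leaves l + leaves r"

text \<open>Grafting the root of T onto the i-th leaf (1-indexed) of S.\<close>
fun graft :: "tree \<Rightarrow> nat \<Rightarrow> tree \<Rightarrow> tree" where
  "graft Lf i T = (if i = 1 then T else Lf)"
| "graft (Nd l r) i T =
     (if i \<le> leaves l then Nd (graft l i T) r else Nd l (graft r (i - leaves l) T))"

text \<open>Erasing the i-th leaf, suppressing the resulting one-input vertex.\<close>
fun erase :: "tree \<Rightarrow> nat \<Rightarrow> tree" where
  "erase Lf i = Lf"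
| "erase (Nd l r) i =
     (if i \<le> leaves l then (if l = Lf then r else Nd (erase l i) r)
      else (if r = Lf then l else Nd l (erase r (i - leaves l))))"

text \<open>Elements of the operad Tree_2^-: the arity-0 element Circ, or a tree.\<close>
datatype elem = Circ | Tr tree

fun arity :: "elem \<Rightarrow> nat" where
  "arity Circ = 0"
| "arity (Tr t) = leaves t"

text \<open>Partial composition c \<circ>_i d (meaningful for 1 \<le> i \<le> arity c).\<close>
fun comp :: "elem \<Rightarrow> nat \<Rightarrow> elem \<Rightarrow> elem" where
  "comp (Tr S) i (Tr T) = Tr (graft S i T)"
| "comp (Tr S) i Circ = (if S = Lf then Circ else Tr (erase S i))"
| "comp Circ i d = Circ"

text \<open>Vectors in Lambda(Q Tree_2^-): (finitely supported) rational coefficient functions.\<close>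
type_synonym vec = "elem \<Rightarrow> rat"

definition basis :: "elem \<Rightarrow> vec" where
  "basis x = (\<lambda>y. if y = x then 1 else 0)"

definition scal :: "rat \<Rightarrow> vec \<Rightarrow> vec" where
  "scal a v = (\<lambda>y. a * v y)"

definition supp :: "vec \<Rightarrow> elem set" where
  "supp v = {x. v x \<noteq> 0}"

definition basic_br :: "elem \<Rightarrow> elem \<Rightarrow> vec" where
  "basic_br c d = (\<Sum>t\<in>{1..arity d}. basis (comp d t c)) - (\<Sum>s\<in>{1..arity c}. basis (comp c s d))"

definition br :: "vec \<Rightarrow> vec \<Rightarrow> vec" where
  "br v w = (\<Sum>c\<in>supp v. \<Sum>d\<in>supp w. scal (v c * w d) (basic_br c d))"

inductive_set lie_gen :: "vec set \<Rightarrow> vec set" for S where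
  gen: "v \<in> S \<Longrightarrow> v \<in> lie_gen S"
| zero: "0 \<in> lie_gen S"
| add: "v \<in> lie_gen S \<Longrightarrow> w \<in> lie_gen S \<Longrightarrow> v + w \<in> lie_gen S"
| smult: "v \<in> lie_gen S \<Longrightarrow> scal a v \<in> lie_gen S"
| bracket: "v \<in> lie_gen S \<Longrightarrow> w \<in> lie_gen S \<Longrightarrow> br v w \<in> lie_gen S"

definition is_lie_subalgebra :: "vec set \<Rightarrow> bool" where
  "is_lie_subalgebra V \<longleftrightarrow> (\<forall>v\<in>V. finite (supp v)) \<and> 0 \<in> V \<and>
     (\<forall>v\<in>V. \<forall>w\<in>V. v + w \<in> V) \<and> (\<forall>a. \<forall>v\<in>V. scal a v \<in> V) \<and>
     (\<forall>v\<in>V. \<forall>w\<in>V. br v w \<in> V)"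

definition h :: "nat \<Rightarrow> vec set" where
  "h m = lie_gen {basis (Tr t) | t. 2 \<le> leaves t \<and> leaves t \<le> m}"

end

theory Submission
  imports Defs
begin

text \<open>
Write C for the element of arity 0 and L for the one-leaf tree. Bracketing with L is the Euler
derivation that multiplies a tree by its arity minus one, so it preserves \<open>h m\<close>. Bracketing
with C sends a tree to the sum of its leaf erasures. On trees with at least two leaves it is a
derivation of the bracket: erasing a leaf of a grafted tree either erases a leaf of the grafted
subtree, or commutes with the grafting, and regrouping the terms gives the Leibniz rule. Erasing a
leaf of a generator of \<open>h m\<close> yields L or another generator, so induction over the generation
of \<open>h m\<close> shows that \<open>[C, h m]\<close> lies in \<open>\<rat> L + h m\<close>. The remaining brackets
\<open>[C, C] = 0\<close>, \<open>[C, L] = C\<close> and \<open>[L, L] = 0\<close> are immediate.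
\<close>

subsection \<open>Grafting and erasing leaves\<close>

lemma leaves_ge_1 [simp]: "1 \<le> leaves t"
  by (induction t) auto

lemma leaves_ge_2_iff: "2 \<le> leaves t \<longleftrightarrow> t \<noteq> Lf"
proof (cases t)
  case (Nd l r)
  then show ?thesis using leaves_ge_1[of l] leaves_ge_1[of r] by simp
qed simp

lemma leaves_eq_1_iff: "leaves t = 1 \<longleftrightarrow> t = Lf"
  using leaves_ge_2_iff[of t] by (cases "t = Lf") auto

lemma leaves_graft [simp]:
  "1 \<le> i \<Longrightarrow> i \<le> leaves S \<Longrightarrow> leaves (graft S i T) = leaves S + leaves T - 1"
  by (induction S arbitrary: i) auto

lemma leaves_erase [simp]:
  "S \<noteq> Lf \<Longrightarrow> 1 \<le> i \<Longrightarrow> i \<le> leaves S \<Longrightarrow> leaves (erase S i) = leaves S - 1"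
  by (induction S arbitrary: i) (auto simp: leaves_eq_1_iff)

lemma graft_Lf_right [simp]: "graft S i Lf = S"
  by (induction S arbitrary: i) auto

lemma graft_eq_Lf_iff:
  "1 \<le> i \<Longrightarrow> i \<le> leaves S \<Longrightarrow> graft S i T = Lf \<longleftrightarrow> S = Lf \<and> T = Lf"
  by (induction S arbitrary: i) auto

lemma erase_graft_inside:
  "\<lbrakk>1 \<le> t; t \<le> leaves d; 1 \<le> u; u \<le> leaves c; c \<noteq> Lf\<rbrakk> \<Longrightarrow>
   erase (graft d t c) (t - 1 + u) = graft d t (erase c u)"
proof (induction d arbitrary: t)
  case (Nd l r)
  show ?case
  proof (cases "t \<le> leaves l")
    case True
    with Nd.prems have "graft l t c \<noteq> Lf" "t - 1 + u \<le> leaves (graft l t c)"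
      by (simp_all add: graft_eq_Lf_iff)
    with True Nd show ?thesis by simp
  next
    case False
    with Nd.prems have "graft r (t - leaves l) c \<noteq> Lf" "\<not> t - 1 + u \<le> leaves l"
      by (simp_all add: graft_eq_Lf_iff)
    moreover have "t - 1 + u - leaves l = t - leaves l - 1 + u" using False by simp
    moreover have "erase (graft r (t - leaves l) c) (t - leaves l - 1 + u)
        = graft r (t - leaves l) (erase c u)"
      using False Nd.IH(2)[of "t - leaves l"] Nd.prems by simp
    ultimately show ?thesis using False by simp
  qed
qed simp

lemma erase_graft_before:
  "\<lbrakk>1 \<le> u; u < t; t \<le> leaves d\<rbrakk> \<Longrightarrow> erase (graft d t c) u = graft (erase d u) (t - 1) c"
proof (induction d arbitrary: t u)
  case (Nd l r)
  consider "t \<le> leaves l" | "u \<le> leaves l" "\<not> t \<le> leaves l" | "\<not> u \<le> leaves l"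
    using Nd.prems by linarith
  then show ?case
  proof cases
    case 1
    with Nd.prems have l: "l \<noteq> Lf" "u \<le> leaves l" by auto
    with 1 Nd.prems have "graft l t c \<noteq> Lf" "u \<le> leaves (graft l t c)"
      "t - 1 \<le> leaves (erase l u)"
      by (auto simp: graft_eq_Lf_iff)
    moreover have "erase (graft l t c) u = graft (erase l u) (t - 1) c"
      using 1 Nd.IH(1) Nd.prems by simp
    ultimately show ?thesis using 1 l by simp
  next
    case 2
    then show ?thesis using Nd.prems by (auto simp: leaves_eq_1_iff)
  next
    case 3
    with Nd.prems have "graft r (t - leaves l) c \<noteq> Lf" "r \<noteq> Lf" "\<not> t - 1 \<le> leaves l"
      by (auto simp: graft_eq_Lf_iff)
    with 3 Nd show ?thesis by (simp add: diff_right_commute)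
  qed
qed simp

lemma erase_graft_after:
  "\<lbrakk>1 \<le> t; t < u; u \<le> leaves d\<rbrakk> \<Longrightarrow>
   erase (graft d t c) (u + leaves c - 1) = graft (erase d u) t c"
proof (induction d arbitrary: t u)
  case (Nd l r)
  consider "u \<le> leaves l" | "t \<le> leaves l" "\<not> u \<le> leaves l" | "\<not> t \<le> leaves l"
    using Nd.prems by linarith
  then show ?case
  proof cases
    case 1
    with Nd.prems have l: "l \<noteq> Lf" "t \<le> leaves l" by auto
    with 1 Nd.prems have "graft l t c \<noteq> Lf" "u + leaves c - 1 \<le> leaves (graft l t c)"
      "t \<le> leaves (erase l u)"
      by (auto simp: graft_eq_Lf_iff)
    moreover have "erase (graft l t c) (u + leaves c - 1) = graft (erase l u) t c"
      using 1 Nd.IH(1) Nd.prems by simp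
    ultimately show ?thesis using 1 l by simp
  next
    case 2
    with Nd.prems have "\<not> u + leaves c - 1 \<le> leaves (graft l t c)"
      "u + leaves c - 1 - leaves (graft l t c) = u - leaves l"
      by simp_all
    with 2 show ?thesis by simp
  next
    case 3
    with Nd.prems have "graft r (t - leaves l) c \<noteq> Lf" "r \<noteq> Lf"
      "\<not> u + leaves c - 1 \<le> leaves l"
      by (auto simp: graft_eq_Lf_iff)
    moreover have "erase (graft r (t - leaves l) c) (u - leaves l + leaves c - 1)
        = graft (erase r (u - leaves l)) (t - leaves l) c"
      using 3 Nd.IH(2)[of "t - leaves l" "u - leaves l"] Nd.prems by simp
    moreover have "u + leaves c - 1 - leaves l = u - leaves l + leaves c - 1"
      using 3 Nd.prems by simp
    ultimately show ?thesis using 3 Nd.prems by simp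
  qed
qed simp

subsection \<open>Finitely supported vectors and the bracket\<close>

lemma sum_fun_apply: "(\<Sum>i\<in>I. f i) x = (\<Sum>i\<in>I. f i x)"
  by (induction I rule: infinite_finite_induct) auto

lemma scal_apply [simp]: "scal a v x = a * v x"
  by (simp add: scal_def)

lemma basis_apply: "basis c x = (if x = c then 1 else 0)"
  by (simp add: basis_def)

lemma scal_sum: "scal a (\<Sum>i\<in>I. f i) = (\<Sum>i\<in>I. scal a (f i))"
  by (simp add: fun_eq_iff sum_fun_apply sum_distrib_left)

lemma supp_basis [simp]: "supp (basis c) = {c}"
  by (auto simp: supp_def basis_def)

lemma supp_zero [simp]: "supp 0 = {}"
  by (simp add: supp_def)

lemma supp_add: "supp (v + w) \<subseteq> supp v \<union> supp w"
  by (auto simp: supp_def)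

lemma supp_diff: "supp (v - w) \<subseteq> supp v \<union> supp w"
  by (auto simp: supp_def)

lemma supp_scal: "supp (scal a v) \<subseteq> supp v"
  by (auto simp: supp_def)

lemma supp_sum: "supp (\<Sum>i\<in>I. f i) \<subseteq> (\<Union>i\<in>I. supp (f i))"
  by (auto simp: supp_def sum_fun_apply intro: ccontr dest: sum.neutral)

lemma finite_supp_add: "finite (supp v) \<Longrightarrow> finite (supp w) \<Longrightarrow> finite (supp (v + w))"
  by (rule finite_subset[OF supp_add]) simp

lemma finite_supp_scal: "finite (supp v) \<Longrightarrow> finite (supp (scal a v))"
  by (rule finite_subset[OF supp_scal])

lemma finite_supp_sum: "(\<And>i. i \<in> I \<Longrightarrow> finite (supp (f i))) \<Longrightarrow> finite (supp (\<Sum>i\<in>I. f i))"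
  by (cases "finite I") (auto intro: finite_subset[OF supp_sum])

lemma finite_supp_basic_br: "finite (supp (basic_br c d))"
  unfolding basic_br_def
  by (rule finite_subset[OF supp_diff]) (auto intro: finite_supp_sum)

lemma finite_supp_br: "finite (supp (br v w))"
  unfolding br_def by (intro finite_supp_sum finite_supp_scal finite_supp_basic_br)

lemma br_apply:
  assumes "finite A" "finite B" "supp v \<subseteq> A" "supp w \<subseteq> B"
  shows "br v w x = (\<Sum>c\<in>A. \<Sum>d\<in>B. v c * w d * basic_br c d x)"
proof -
  have "br v w x = (\<Sum>c\<in>supp v. \<Sum>d\<in>supp w. v c * w d * basic_br c d x)"
    by (simp add: br_def sum_fun_apply)
  also have "\<dots> = (\<Sum>c\<in>A. \<Sum>d\<in>B. v c * w d * basic_br c d x)"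
    using assms by (intro sum.mono_neutral_cong_left ballI sum.mono_neutral_left)
      (auto simp: supp_def intro!: sum.neutral)
  finally show ?thesis .
qed

lemma br_add_left:
  assumes "finite (supp v)" "finite (supp v')" "finite (supp w)"
  shows "br (v + v') w = br v w + br v' w"
proof
  fix x
  let ?A = "supp v \<union> supp v'"
  show "br (v + v') w x = (br v w + br v' w) x"
    using assms supp_add[of v v']
    by (simp add: br_apply[of ?A "supp w"] distrib_right sum.distrib)
qed

lemma br_scal_left:
  assumes "finite (supp v)" "finite (supp w)"
  shows "br (scal a v) w = scal a (br v w)"
proof
  fix x
  show "br (scal a v) w x = scal a (br v w) x"
    using assms supp_scal[of a v]
    by (simp add: br_apply[of "supp v" "supp w"] sum_distrib_left mult.assoc)
qed

lemma br_antisym: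
  assumes "finite (supp v)" "finite (supp w)"
  shows "br v w = scal (-1) (br w v)"
proof
  fix x
  have "br v w x = - (\<Sum>d\<in>supp w. \<Sum>c\<in>supp v. w d * v c * basic_br d c x)"
    using assms
    by (subst sum.swap) (simp add: br_apply basic_br_def sum_negf[symmetric] algebra_simps)
  then show "br v w x = scal (-1) (br w v) x"
    using assms by (simp add: br_apply)
qed

lemma scal_scal: "scal a (scal b v) = scal (a * b) v"
  by (simp add: scal_def mult.assoc)

lemma scal_add: "scal a (v + w) = scal a v + scal a w"
  by (simp add: scal_def fun_eq_iff distrib_left)

lemma scal_one [simp]: "scal 1 v = v"
  by (simp add: scal_def)

lemma scal_zero_left [simp]: "scal 0 v = 0"
  by (simp add: scal_def fun_eq_iff)

lemma scal_zero_right [simp]: "scal a 0 = 0"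
  by (simp add: scal_def fun_eq_iff)

lemma scal_add_left: "scal (a + b) v = scal a v + scal b v"
  by (simp add: scal_def fun_eq_iff distrib_right)

lemma br_add_right:
  assumes "finite (supp v)" "finite (supp w)" "finite (supp w')"
  shows "br v (w + w') = br v w + br v w'"
  using assms
  by (simp add: br_antisym[of v] br_add_left finite_supp_add finite_supp_br scal_add)

lemma br_scal_right:
  assumes "finite (supp v)" "finite (supp w)"
  shows "br v (scal a w) = scal a (br v w)"
  using assms
  by (simp add: br_antisym[of v] br_scal_left finite_supp_scal finite_supp_br scal_scal mult.commute)

lemma br_zero_left [simp]: "br 0 w = 0"
  by (simp add: br_def)

lemma br_diff_right:
  assumes "finite (supp v)" "finite (supp w)" "finite (supp w')"
  shows "br v (w - w') = br v w - br v w'"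
proof -
  have "br v (w - w') = br v (w + scal (-1) w')"
    by (rule arg_cong[where f = "br v"]) (simp add: scal_def fun_eq_iff)
  also have "\<dots> = br v w + scal (-1) (br v w')"
    using assms by (simp add: br_add_right br_scal_right finite_supp_scal)
  finally show ?thesis
    by (simp add: scal_def fun_eq_iff)
qed

lemma br_zero_right [simp]: "br v 0 = 0"
  by (simp add: br_def)

lemma br_sum_left:
  assumes "finite (supp w)" "\<And>i. i \<in> I \<Longrightarrow> finite (supp (f i))"
  shows "br (\<Sum>i\<in>I. f i) w = (\<Sum>i\<in>I. br (f i) w)"
  using assms(2)
  by (induction I rule: infinite_finite_induct)
    (simp_all add: br_add_left[OF _ _ assms(1)] finite_supp_sum)

lemma br_sum_right:
  assumes "finite (supp v)" "\<And>i. i \<in> I \<Longrightarrow> finite (supp (f i))"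
  shows "br v (\<Sum>i\<in>I. f i) = (\<Sum>i\<in>I. br v (f i))"
  using assms
  by (simp add: br_antisym[of v] br_sum_left finite_supp_sum scal_sum)

lemma vec_expansion:
  assumes "finite (supp v)"
  shows "v = (\<Sum>c\<in>supp v. scal (v c) (basis c))"
proof
  fix x
  show "v x = (\<Sum>c\<in>supp v. scal (v c) (basis c)) x"
    using assms by (simp add: sum_fun_apply basis_apply if_distrib supp_def cong: if_cong)
qed

lemma br_basis: "br (basis c) (basis d) = basic_br c d"
  by (simp add: br_def basis_apply)

lemma br_lincomb_left:
  assumes "finite (supp w)" "\<And>i. i \<in> I \<Longrightarrow> finite (supp (f i))"
  shows "br (\<Sum>i\<in>I. scal (a i) (f i)) w = (\<Sum>i\<in>I. scal (a i) (br (f i) w))"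
  using assms by (simp add: br_sum_left br_scal_left finite_supp_scal)

lemma br_lincomb_right:
  assumes "finite (supp v)" "\<And>i. i \<in> I \<Longrightarrow> finite (supp (f i))"
  shows "br v (\<Sum>i\<in>I. scal (a i) (f i)) = (\<Sum>i\<in>I. scal (a i) (br v (f i)))"
  using assms by (simp add: br_sum_right br_scal_right finite_supp_scal)

lemma br_expansion_right:
  assumes "finite (supp u)" "finite (supp v)"
  shows "br u v = (\<Sum>c\<in>supp v. scal (v c) (br u (basis c)))"
proof -
  have "br u v = br u (\<Sum>c\<in>supp v. scal (v c) (basis c))"
    using assms(2) by (rule arg_cong[OF vec_expansion])
  then show ?thesis
    using assms(1) by (simp add: br_lincomb_right)
qed

lemma br_lincomb:
  assumes "finite I" "finite J"
    and "\<And>i. i \<in> I \<Longrightarrow> finite (supp (f i))" "\<And>j. j \<in> J \<Longrightarrow> finite (supp (g j))"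
  shows "br (\<Sum>i\<in>I. scal (a i) (f i)) (\<Sum>j\<in>J. scal (b j) (g j))
       = (\<Sum>(i, j)\<in>I \<times> J. scal (a i * b j) (br (f i) (g j)))"
proof -
  have "br (\<Sum>i\<in>I. scal (a i) (f i)) (\<Sum>j\<in>J. scal (b j) (g j))
      = (\<Sum>i\<in>I. scal (a i) (br (f i) (\<Sum>j\<in>J. scal (b j) (g j))))"
    using assms by (intro br_lincomb_left) (auto intro: finite_supp_sum finite_supp_scal)
  also have "\<dots> = (\<Sum>i\<in>I. \<Sum>j\<in>J. scal (a i * b j) (br (f i) (g j)))"
    using assms by (simp add: br_lincomb_right scal_sum scal_scal)
  finally show ?thesis
    by (simp add: sum.cartesian_product)
qed

subsection \<open>The Euler derivation\<close>

definition deg :: "elem \<Rightarrow> rat" where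
  "deg x = of_nat (arity x) - 1"

definition euler :: "vec \<Rightarrow> vec" where
  "euler v = (\<lambda>x. deg x * v x)"

lemma deg_comp:
  assumes "1 \<le> t" "t \<le> arity d"
  shows "deg (comp d t c) = deg d + deg c"
proof (cases d)
  case (Tr S)
  with assms have "S = Lf \<Longrightarrow> t = 1" by simp
  with assms Tr show ?thesis
    by (cases c) (auto simp: deg_def leaves_eq_1_iff)
qed (use assms in simp)

lemma deg_basic_br: "deg x * basic_br c d x = (deg c + deg d) * basic_br c d x"
  by (simp add: basic_br_def sum_fun_apply sum_distrib_left right_diff_distrib basis_apply
      deg_comp add.commute if_distrib cong: if_cong)

lemma supp_euler: "supp (euler v) \<subseteq> supp v"
  by (auto simp: supp_def euler_def)

lemma euler_zero [simp]: "euler 0 = 0"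
  by (simp add: euler_def fun_eq_iff)

lemma euler_add: "euler (v + w) = euler v + euler w"
  by (simp add: euler_def fun_eq_iff algebra_simps)

lemma euler_scal: "euler (scal a v) = scal a (euler v)"
  by (simp add: euler_def fun_eq_iff algebra_simps)

lemma euler_basis: "euler (basis c) = scal (deg c) (basis c)"
  by (simp add: euler_def fun_eq_iff basis_apply)

lemma euler_br:
  assumes "finite (supp v)" "finite (supp w)"
  shows "euler (br v w) = br (euler v) w + br v (euler w)"
proof
  fix x
  have "euler (br v w) x = (\<Sum>c\<in>supp v. \<Sum>d\<in>supp w. v c * w d * (deg x * basic_br c d x))"
    using assms by (simp add: euler_def br_apply sum_distrib_left algebra_simps)
  also have "\<dots> = (br (euler v) w + br v (euler w)) x"
    using assms supp_euler[of v] supp_euler[of w]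
    by (simp add: deg_basic_br br_apply[of "supp v" "supp w"] euler_def sum.distrib[symmetric]
        algebra_simps)
  finally show "euler (br v w) x = (br (euler v) w + br v (euler w)) x" .
qed

lemma basic_br_Lf_left: "basic_br (Tr Lf) d = scal (deg d) (basis d)"
  by (cases d) (auto simp: basic_br_def deg_def fun_eq_iff basis_apply)

lemma br_Lf_left:
  assumes "finite (supp v)"
  shows "br (basis (Tr Lf)) v = euler v"
proof
  fix x
  show "br (basis (Tr Lf)) v x = euler v x"
    using assms
    by (simp add: br_apply[of "{Tr Lf}" "supp v"] basis_apply basic_br_Lf_left euler_def supp_def
        if_distrib mult.commute cong: if_cong)
qed

subsection \<open>Bracketing with the element of arity zero\<close>

text \<open>
Both sides count pairs of a leaf \<open>u\<close> of a tree with \<open>j\<close> leaves and a leaf of that tree with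
\<open>u\<close> erased; on the left the second leaf is named by its old position \<open>t \<noteq> u\<close>.
\<close>

lemma sum_distinct_pairs:
  fixes h :: "nat \<Rightarrow> nat \<Rightarrow> 'a::comm_monoid_add"
  shows "(\<Sum>t\<in>{1..j}. (\<Sum>u\<in>{1..<t}. h u (t - 1)) + (\<Sum>u\<in>{Suc t..j}. h u t))
       = (\<Sum>u\<in>{1..j}. \<Sum>t\<in>{1..<j}. h u t)"
proof (induction j)
  case (Suc j)
  have "(\<Sum>t\<in>{1..Suc j}. (\<Sum>u\<in>{1..<t}. h u (t - 1)) + (\<Sum>u\<in>{Suc t..Suc j}. h u t))
      = (\<Sum>t\<in>{1..j}. (\<Sum>u\<in>{1..<t}. h u (t - 1)) + (\<Sum>u\<in>{Suc t..j}. h u t))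
        + (\<Sum>t\<in>{1..j}. h (Suc j) t) + (\<Sum>u\<in>{1..j}. h u j)"
    by (simp add: sum.distrib atLeastLessThanSuc_atLeastAtMost ac_simps)
  also have "\<dots> = (\<Sum>u\<in>{1..j}. \<Sum>t\<in>{1..<j}. h u t) + (\<Sum>t\<in>{1..j}. h (Suc j) t)
      + (\<Sum>u\<in>{1..j}. h u j)"
    by (simp only: Suc.IH)
  also have "\<dots> = (\<Sum>u\<in>{1..Suc j}. \<Sum>t\<in>{1..<Suc j}. h u t)"
  proof -
    have "(\<Sum>t\<in>{1..<Suc j}. h u t) = (\<Sum>t\<in>{1..<j}. h u t) + h u j" if "u \<in> {1..j}" for u
      using that by simp
    then show ?thesis
      by (simp add: sum.distrib atLeastLessThanSuc_atLeastAtMost ac_simps)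
  qed
  finally show ?case .
qed simp

lemma sum_erase_graft_at:
  fixes g :: "tree \<Rightarrow> 'a::comm_monoid_add"
  assumes c: "c \<noteq> Lf" and t: "1 \<le> t" "t \<le> leaves d"
  shows "(\<Sum>u\<in>{1..leaves d + leaves c - 1}. g (erase (graft d t c) u))
       = (\<Sum>u\<in>{1..<t}. g (graft (erase d u) (t - 1) c))
       + (\<Sum>u\<in>{1..leaves c}. g (graft d t (erase c u)))
       + (\<Sum>u\<in>{Suc t..leaves d}. g (graft (erase d u) t c))"
proof -
  define j k where "j = leaves d" and "k = leaves c"
  have k: "1 \<le> k" unfolding k_def by (rule leaves_ge_1)
  let ?G = "\<lambda>u. g (erase (graft d t c) u)"
  have "{1..j + k - 1} = {1..<j + k}" using k by auto
  with t k have "sum ?G {1..j + k - 1}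
      = sum ?G {1..<t} + sum ?G {t..<t + k} + sum ?G {t + k..<j + k}"
    by (simp add: sum.atLeastLessThan_concat j_def)
  moreover have "sum ?G {1..<t} = (\<Sum>u\<in>{1..<t}. g (graft (erase d u) (t - 1) c))"
    using t by (intro sum.cong refl) (simp add: erase_graft_before)
  moreover have "sum ?G {t..<t + k} = (\<Sum>u\<in>{1..k}. g (graft d t (erase c u)))"
  proof (rule sum.reindex_bij_witness[where i = "\<lambda>u. t - 1 + u" and j = "\<lambda>u. u - (t - 1)"])
    fix a assume a: "a \<in> {t..<t + k}"
    have "erase (graft d t c) (t - 1 + (a - (t - 1))) = graft d t (erase c (a - (t - 1)))"
      by (rule erase_graft_inside) (use a t c in \<open>auto simp: k_def\<close>)
    moreover have "t - 1 + (a - (t - 1)) = a" using a t by simp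
    ultimately show "g (graft d t (erase c (a - (t - 1)))) = ?G a" by simp
  qed (use t in auto)
  moreover have "sum ?G {t + k..<j + k} = (\<Sum>u\<in>{Suc t..j}. g (graft (erase d u) t c))"
  proof (rule sum.reindex_bij_witness[where i = "\<lambda>u. u + k - 1" and j = "\<lambda>u. u + 1 - k"])
    fix a assume a: "a \<in> {t + k..<j + k}"
    have "erase (graft d t c) (a + 1 - k + leaves c - 1) = graft (erase d (a + 1 - k)) t c"
      by (rule erase_graft_after) (use a t k in \<open>auto simp: j_def\<close>)
    moreover have "a + 1 - k + leaves c - 1 = a" using a k by (simp add: k_def)
    ultimately show "g (graft (erase d (a + 1 - k)) t c) = ?G a" by simp
  qed (use k in auto)
  ultimately show ?thesis by (simp add: j_def k_def)
qed

lemma sum_erase_graft: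
  fixes g :: "tree \<Rightarrow> 'a::comm_monoid_add"
  assumes "c \<noteq> Lf"
  shows "(\<Sum>t\<in>{1..leaves d}. \<Sum>u\<in>{1..leaves d + leaves c - 1}. g (erase (graft d t c) u))
       = (\<Sum>u\<in>{1..leaves c}. \<Sum>t\<in>{1..leaves d}. g (graft d t (erase c u)))
       + (\<Sum>u\<in>{1..leaves d}. \<Sum>t\<in>{1..leaves d - 1}. g (graft (erase d u) t c))"
proof -
  let ?h = "\<lambda>u t. g (graft (erase d u) t c)"
  have "(\<Sum>t\<in>{1..leaves d}. \<Sum>u\<in>{1..leaves d + leaves c - 1}. g (erase (graft d t c) u))
      = (\<Sum>t\<in>{1..leaves d}. (\<Sum>u\<in>{1..<t}. ?h u (t - 1))
          + (\<Sum>u\<in>{1..leaves c}. g (graft d t (erase c u))) + (\<Sum>u\<in>{Suc t..leaves d}. ?h u t))"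
    using assms by (intro sum.cong refl sum_erase_graft_at) auto
  also have "\<dots> = (\<Sum>t\<in>{1..leaves d}. \<Sum>u\<in>{1..leaves c}. g (graft d t (erase c u)))
      + (\<Sum>t\<in>{1..leaves d}. (\<Sum>u\<in>{1..<t}. ?h u (t - 1)) + (\<Sum>u\<in>{Suc t..leaves d}. ?h u t))"
    by (simp add: sum.distrib ac_simps)
  also have "\<dots> = (\<Sum>u\<in>{1..leaves c}. \<Sum>t\<in>{1..leaves d}. g (graft d t (erase c u)))
      + (\<Sum>u\<in>{1..leaves d}. \<Sum>t\<in>{1..<leaves d}. ?h u t)"
    using sum_distinct_pairs[of ?h "leaves d"]
      sum.swap[of "\<lambda>t u. g (graft d t (erase c u))" "{1..leaves c}" "{1..leaves d}"]
    by simp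
  also have "{1..<leaves d} = {1..leaves d - 1}"
    using leaves_ge_1[of d] by auto
  finally show ?thesis .
qed

lemma basic_br_Circ_left:
  "T \<noteq> Lf \<Longrightarrow> basic_br Circ (Tr T) = (\<Sum>u\<in>{1..leaves T}. basis (Tr (erase T u)))"
  by (simp add: basic_br_def)

lemma basic_br_trees:
  "basic_br (Tr c) (Tr d) = (\<Sum>t\<in>{1..leaves d}. basis (Tr (graft d t c)))
                           - (\<Sum>s\<in>{1..leaves c}. basis (Tr (graft c s d)))"
  by (simp add: basic_br_def)

lemma br_Circ_sum_graft:
  assumes "c \<noteq> Lf"
  shows "br (basis Circ) (\<Sum>t\<in>{1..leaves d}. basis (Tr (graft d t c)))
       = (\<Sum>t\<in>{1..leaves d}. \<Sum>u\<in>{1..leaves d + leaves c - 1}. basis (Tr (erase (graft d t c) u)))"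
proof -
  have "br (basis Circ) (basis (Tr (graft d t c)))
      = (\<Sum>u\<in>{1..leaves d + leaves c - 1}. basis (Tr (erase (graft d t c) u)))"
    if "t \<in> {1..leaves d}" for t
    using that assms by (simp add: br_basis basic_br_Circ_left graft_eq_Lf_iff)
  then show ?thesis
    by (simp add: br_sum_right)
qed

lemma br_Circ_Leibniz_trees:
  assumes c: "c \<noteq> Lf" and d: "d \<noteq> Lf"
  shows "br (basis Circ) (br (basis (Tr c)) (basis (Tr d)))
       = br (br (basis Circ) (basis (Tr c))) (basis (Tr d))
       + br (basis (Tr c)) (br (basis Circ) (basis (Tr d)))"
proof -
  define A where "A c d =
    (\<Sum>u\<in>{1..leaves c}. \<Sum>t\<in>{1..leaves d}. basis (Tr (graft d t (erase c u))))" for c d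
  define B where "B c d =
    (\<Sum>u\<in>{1..leaves d}. \<Sum>t\<in>{1..leaves d - 1}. basis (Tr (graft (erase d u) t c)))" for c d
  have "br (basis Circ) (br (basis (Tr c)) (basis (Tr d)))
      = br (basis Circ) (\<Sum>t\<in>{1..leaves d}. basis (Tr (graft d t c)))
      - br (basis Circ) (\<Sum>s\<in>{1..leaves c}. basis (Tr (graft c s d)))"
    unfolding br_basis basic_br_trees by (rule br_diff_right) (simp_all add: finite_supp_sum)
  also have "\<dots> = (A c d + B c d) - (A d c + B d c)"
    unfolding A_def B_def
    by (simp only: br_Circ_sum_graft[OF c] br_Circ_sum_graft[OF d]
        sum_erase_graft[OF c, where g = "\<lambda>T. basis (Tr T)"]
        sum_erase_graft[OF d, where g = "\<lambda>T. basis (Tr T)"])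
  finally have L: "br (basis Circ) (br (basis (Tr c)) (basis (Tr d)))
      = (A c d + B c d) - (A d c + B d c)" .
  have "br (basis (Tr (erase c u))) (basis (Tr d))
      = (\<Sum>t\<in>{1..leaves d}. basis (Tr (graft d t (erase c u))))
      - (\<Sum>t\<in>{1..leaves c - 1}. basis (Tr (graft (erase c u) t d)))"
    if "u \<in> {1..leaves c}" for u
    using that c by (simp add: br_basis basic_br_trees)
  then have R1: "br (br (basis Circ) (basis (Tr c))) (basis (Tr d)) = A c d - B d c"
    using c unfolding A_def B_def
    by (simp add: br_basis basic_br_Circ_left br_sum_left sum_subtractf)
  have "br (basis (Tr c)) (basis (Tr (erase d u)))
      = (\<Sum>t\<in>{1..leaves d - 1}. basis (Tr (graft (erase d u) t c)))
      - (\<Sum>t\<in>{1..leaves c}. basis (Tr (graft c t (erase d u))))"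
    if "u \<in> {1..leaves d}" for u
    using that d by (simp add: br_basis basic_br_trees)
  then have R2: "br (basis (Tr c)) (br (basis Circ) (basis (Tr d))) = B c d - A d c"
    using d unfolding A_def B_def
    by (simp add: br_basis basic_br_Circ_left br_sum_right sum_subtractf)
  show ?thesis
    unfolding L R1 R2 by (simp add: algebra_simps)
qed

lemma br_Circ_Leibniz:
  assumes v: "finite (supp v)" "supp v \<subseteq> {x. 2 \<le> arity x}"
    and w: "finite (supp w)" "supp w \<subseteq> {x. 2 \<le> arity x}"
  shows "br (basis Circ) (br v w) = br (br (basis Circ) v) w + br v (br (basis Circ) w)"
proof -
  let ?C = "basis Circ" and ?P = "supp v \<times> supp w"
  have Leibniz: "br ?C (br (basis c) (basis d))
      = br (br ?C (basis c)) (basis d) + br (basis c) (br ?C (basis d))" if "(c, d) \<in> ?P" for c d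
  proof -
    from that v w have "2 \<le> arity c" "2 \<le> arity d"
      by auto
    then obtain s t where "c = Tr s" "s \<noteq> Lf" "d = Tr t" "t \<noteq> Lf"
      by (cases c; cases d) (auto simp: leaves_ge_2_iff)
    then show ?thesis by (simp add: br_Circ_Leibniz_trees)
  qed
  have "br ?C (br v w)
      = br ?C (br (\<Sum>c\<in>supp v. scal (v c) (basis c)) (\<Sum>d\<in>supp w. scal (w d) (basis d)))"
    using v w by (simp only: vec_expansion[symmetric])
  also have "\<dots> = (\<Sum>(c, d)\<in>?P. scal (v c * w d) (br ?C (br (basis c) (basis d))))"
    using v w by (simp add: br_lincomb br_lincomb_right finite_supp_br split_def)
  also have "\<dots> = (\<Sum>(c, d)\<in>?P. scal (v c * w d) (br (br ?C (basis c)) (basis d)))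
      + (\<Sum>(c, d)\<in>?P. scal (v c * w d) (br (basis c) (br ?C (basis d))))"
    by (simp add: Leibniz scal_add sum.distrib split_def cong: sum.cong)
  also have "\<dots> = br (\<Sum>c\<in>supp v. scal (v c) (br ?C (basis c))) (\<Sum>d\<in>supp w. scal (w d) (basis d))
      + br (\<Sum>c\<in>supp v. scal (v c) (basis c)) (\<Sum>d\<in>supp w. scal (w d) (br ?C (basis d)))"
    using v w by (simp add: br_lincomb finite_supp_br)
  also have "\<dots> = br (br ?C v) w + br v (br ?C w)"
    using v w
    by (simp add: br_expansion_right[OF _ v(1)] br_expansion_right[OF _ w(1)]
        vec_expansion[OF v(1), symmetric] vec_expansion[OF w(1), symmetric])
  finally show ?thesis .
qed

subsection \<open>The subalgebra\<close>

lemma arity_ge_2_iff_deg: "2 \<le> arity x \<longleftrightarrow> 1 \<le> deg x"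
  by (simp add: deg_def)

lemma supp_basic_br_arity_ge_2:
  assumes "2 \<le> arity c" "2 \<le> arity d"
  shows "supp (basic_br c d) \<subseteq> {x. 2 \<le> arity x}"
proof -
  have "supp (basic_br c d)
      \<subseteq> (\<Union>t\<in>{1..arity d}. supp (basis (comp d t c))) \<union> (\<Union>s\<in>{1..arity c}. supp (basis (comp c s d)))"
    unfolding basic_br_def by (rule order.trans[OF supp_diff Un_mono[OF supp_sum supp_sum]])
  then show ?thesis
    using assms by (auto simp: arity_ge_2_iff_deg deg_comp)
qed

lemma supp_br_arity_ge_2:
  assumes "supp v \<subseteq> {x. 2 \<le> arity x}" "supp w \<subseteq> {x. 2 \<le> arity x}"
  shows "supp (br v w) \<subseteq> {x. 2 \<le> arity x}"
proof -
  have "supp (br v w) \<subseteq> (\<Union>c\<in>supp v. supp (\<Sum>d\<in>supp w. scal (v c * w d) (basic_br c d)))"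
    unfolding br_def by (rule supp_sum)
  also have "\<dots> \<subseteq> (\<Union>c\<in>supp v. \<Union>d\<in>supp w. supp (basic_br c d))"
    using order.trans[OF supp_sum UN_mono[OF order.refl supp_scal]] by (rule UN_mono[OF order.refl])
  also have "\<dots> \<subseteq> {x. 2 \<le> arity x}"
    using assms supp_basic_br_arity_ge_2 by blast
  finally show ?thesis .
qed

lemma finite_supp_lie_gen:
  assumes "\<And>v. v \<in> S \<Longrightarrow> finite (supp v)" "x \<in> lie_gen S"
  shows "finite (supp x)"
  using assms(2)
  by induction (simp_all only: assms(1) supp_zero finite.emptyI finite_supp_add finite_supp_scal finite_supp_br)
lemma supp_lie_gen_arity_ge_2:
  assumes "\<And>v. v \<in> S \<Longrightarrow> supp v \<subseteq> {x. 2 \<le> arity x}" "x \<in> lie_gen S"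
  shows "supp x \<subseteq> {x. 2 \<le> arity x}"
  using assms(2)
proof induction
  case (add v w)
  then show ?case using supp_add[of v w] by blast
next
  case (smult v a)
  then show ?case using supp_scal[of a v] by blast
qed (simp_all only: assms(1) supp_zero empty_subsetI supp_br_arity_ge_2)

lemma euler_lie_gen:
  assumes "\<And>v. v \<in> S \<Longrightarrow> finite (supp v)" "\<And>v. v \<in> S \<Longrightarrow> euler v \<in> lie_gen S"
    and "x \<in> lie_gen S"
  shows "euler x \<in> lie_gen S"
  using assms(3)
proof induction
  case (bracket v w)
  then have "euler (br v w) = br (euler v) w + br v (euler w)"
    by (intro euler_br finite_supp_lie_gen[OF assms(1)])
  then show ?case
    using bracket by (metis lie_gen.add lie_gen.bracket)
qed (simp_all only: assms(2) euler_zero euler_add euler_scal lie_gen.zero lie_gen.add lie_gen.smult)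

lemma finite_supp_h: "x \<in> h m \<Longrightarrow> finite (supp x)"
  unfolding h_def by (rule finite_supp_lie_gen) auto

lemma supp_h: "x \<in> h m \<Longrightarrow> supp x \<subseteq> {x. 2 \<le> arity x}"
  unfolding h_def by (rule supp_lie_gen_arity_ge_2) auto

lemma euler_h: "x \<in> h m \<Longrightarrow> euler x \<in> h m"
  unfolding h_def
proof (rule euler_lie_gen)
  fix v assume "v \<in> {basis (Tr t) | t. 2 \<le> leaves t \<and> leaves t \<le> m}"
  then obtain t where v: "v = basis (Tr t)" and "2 \<le> leaves t" "leaves t \<le> m"
    by blast
  then show "euler v \<in> lie_gen {basis (Tr t) | t. 2 \<le> leaves t \<and> leaves t \<le> m}"
    unfolding v euler_basis by (intro lie_gen.smult lie_gen.gen) auto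
qed auto

lemma h_closed:
  "0 \<in> h m"
  "x \<in> h m \<Longrightarrow> y \<in> h m \<Longrightarrow> x + y \<in> h m"
  "x \<in> h m \<Longrightarrow> scal a x \<in> h m"
  "x \<in> h m \<Longrightarrow> y \<in> h m \<Longrightarrow> br x y \<in> h m"
  unfolding h_def by (fact lie_gen.intros)+

definition ext_h :: "nat \<Rightarrow> vec set" where
  "ext_h m = {scal a (basis Circ) + scal b (basis (Tr Lf)) + x | a b x. x \<in> h m}"

lemma ext_hI: "x \<in> h m \<Longrightarrow> scal a (basis Circ) + scal b (basis (Tr Lf)) + x \<in> ext_h m"
  unfolding ext_h_def by blast

lemma ext_hE:
  assumes "u \<in> ext_h m"
  obtains a b x where "u = scal a (basis Circ) + scal b (basis (Tr Lf)) + x" "x \<in> h m"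
  using assms unfolding ext_h_def by blast

lemma h_subset_ext_h: "x \<in> h m \<Longrightarrow> x \<in> ext_h m"
  using ext_hI[where a = 0 and b = 0] by simp

lemma Circ_in_ext_h: "scal a (basis Circ) \<in> ext_h m"
  using ext_hI[OF h_closed(1), where a = a and b = 0] by simp

lemma Lf_in_ext_h: "scal b (basis (Tr Lf)) \<in> ext_h m"
  using ext_hI[OF h_closed(1), where a = 0 and b = b] by simp

lemma ext_h_add:
  assumes "u \<in> ext_h m" "u' \<in> ext_h m"
  shows "u + u' \<in> ext_h m"
proof -
  obtain a b x where u: "u = scal a (basis Circ) + scal b (basis (Tr Lf)) + x" and "x \<in> h m"
    using assms(1) by (rule ext_hE)
  obtain a' b' x'
    where u': "u' = scal a' (basis Circ) + scal b' (basis (Tr Lf)) + x'" and "x' \<in> h m"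
    using assms(2) by (rule ext_hE)
  from \<open>x \<in> h m\<close> \<open>x' \<in> h m\<close>
  have "scal (a + a') (basis Circ) + scal (b + b') (basis (Tr Lf)) + (x + x') \<in> ext_h m"
    by (intro ext_hI h_closed)
  then show ?thesis
    unfolding u u' by (simp add: scal_add_left ac_simps)
qed

lemma ext_h_scal:
  assumes "u \<in> ext_h m"
  shows "scal c u \<in> ext_h m"
proof -
  obtain a b x where u: "u = scal a (basis Circ) + scal b (basis (Tr Lf)) + x" and "x \<in> h m"
    using assms by (rule ext_hE)
  then have "scal (c * a) (basis Circ) + scal (c * b) (basis (Tr Lf)) + scal c x \<in> ext_h m"
    by (intro ext_hI h_closed)
  then show ?thesis
    unfolding u by (simp add: scal_add scal_scal)
qed

lemma ext_h_sum: "(\<And>i. i \<in> I \<Longrightarrow> f i \<in> ext_h m) \<Longrightarrow> (\<Sum>i\<in>I. f i) \<in> ext_h m"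
proof (induction I rule: infinite_finite_induct)
  case (insert i I)
  then show ?case
    unfolding sum.insert[OF insert(1,2)] by (intro ext_h_add) auto
qed (simp_all add: h_subset_ext_h h_closed(1))

lemma finite_supp_ext_h: "u \<in> ext_h m \<Longrightarrow> finite (supp u)"
  by (elim ext_hE) (simp add: finite_supp_add finite_supp_scal finite_supp_h)

lemma euler_ext_h:
  assumes "u \<in> ext_h m"
  shows "euler u \<in> ext_h m"
proof -
  obtain a b x where u: "u = scal a (basis Circ) + scal b (basis (Tr Lf)) + x" and "x \<in> h m"
    using assms by (rule ext_hE)
  then have "scal (- a) (basis Circ) + scal 0 (basis (Tr Lf)) + euler x \<in> ext_h m"
    by (intro ext_hI euler_h)
  then show ?thesis
    unfolding u by (simp add: euler_add euler_scal euler_basis deg_def scal_scal)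
qed

lemma br_ext_h_left:
  assumes "u \<in> ext_h m" "finite (supp w)"
    and "br (basis Circ) w \<in> ext_h m" "euler w \<in> ext_h m"
    and "\<And>y. y \<in> h m \<Longrightarrow> br y w \<in> ext_h m"
  shows "br u w \<in> ext_h m"
proof -
  obtain a b x where u: "u = scal a (basis Circ) + scal b (basis (Tr Lf)) + x" and x: "x \<in> h m"
    using assms(1) by (rule ext_hE)
  have "br u w = scal a (br (basis Circ) w) + scal b (euler w) + br x w"
    unfolding u using assms(2) finite_supp_h[OF x]
    by (simp add: br_add_left br_scal_left finite_supp_add finite_supp_scal br_Lf_left)
  also have "\<dots> \<in> ext_h m"
    using assms(3-5) x by (intro ext_h_add ext_h_scal)
  finally show ?thesis .
qed

lemma br_ext_h_h_if_Circ:
  assumes "u \<in> ext_h m" "x \<in> h m" "br (basis Circ) x \<in> ext_h m"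
  shows "br u x \<in> ext_h m"
  using assms(2)
  by (intro br_ext_h_left[OF assms(1) finite_supp_h assms(3) h_subset_ext_h[OF euler_h]])
    (simp_all add: h_subset_ext_h h_closed(4))

lemma br_Circ_generator:
  assumes "2 \<le> leaves t" "leaves t \<le> m"
  shows "br (basis Circ) (basis (Tr t)) \<in> ext_h m"
proof -
  have t: "t \<noteq> Lf" using assms(1) by (simp add: leaves_ge_2_iff)
  have "basis (Tr (erase t u)) \<in> ext_h m" if "u \<in> {1..leaves t}" for u
  proof (cases "erase t u = Lf")
    case True
    then show ?thesis using Lf_in_ext_h[of 1 m] by simp
  next
    case False
    with that t assms have "basis (Tr (erase t u)) \<in> h m"
      unfolding h_def by (intro lie_gen.gen) (auto simp: leaves_ge_2_iff)
    then show ?thesis by (rule h_subset_ext_h)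
  qed
  then show ?thesis
    unfolding br_basis basic_br_Circ_left[OF t] by (rule ext_h_sum)
qed

lemma br_Circ_h:
  assumes "x \<in> h m"
  shows "br (basis Circ) x \<in> ext_h m"
proof -
  from assms have "x \<in> lie_gen {basis (Tr t) | t. 2 \<le> leaves t \<and> leaves t \<le> m}"
    by (simp add: h_def)
  then show ?thesis
  proof induction
    case (gen v)
    then show ?case by (auto intro: br_Circ_generator)
  next
    case zero
    show ?case
      unfolding br_zero_right by (intro h_subset_ext_h h_closed(1))
  next
    case (add v w)
    then have "v \<in> h m" "w \<in> h m" by (simp_all add: h_def)
    then have "br (basis Circ) (v + w) = br (basis Circ) v + br (basis Circ) w"
      by (intro br_add_right) (simp_all add: finite_supp_h)
    then show ?case using add.IH by (simp only: ext_h_add)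
  next
    case (smult v a)
    then have "v \<in> h m" by (simp add: h_def)
    then have "br (basis Circ) (scal a v) = scal a (br (basis Circ) v)"
      by (intro br_scal_right) (simp_all add: finite_supp_h)
    then show ?case using smult.IH by (simp only: ext_h_scal)
  next
    case (bracket v w)
    then have v: "v \<in> h m" and w: "w \<in> h m" by (simp_all add: h_def)
    have "br v (br (basis Circ) w) = scal (-1) (br (br (basis Circ) w) v)"
      using v by (intro br_antisym finite_supp_h finite_supp_br)
    moreover have "br (basis Circ) (br v w) = br (br (basis Circ) v) w + br v (br (basis Circ) w)"
      using v w by (simp add: br_Circ_Leibniz finite_supp_h supp_h)
    ultimately have "br (basis Circ) (br v w)
        = br (br (basis Circ) v) w + scal (-1) (br (br (basis Circ) w) v)"
      by simp
    also have "\<dots> \<in> ext_h m"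
      using br_ext_h_h_if_Circ[OF bracket.IH(1) w bracket.IH(2)]
        br_ext_h_h_if_Circ[OF bracket.IH(2) v bracket.IH(1)]
      by (intro ext_h_add ext_h_scal)
    finally show ?case .
  qed
qed

lemma br_ext_h_h:
  assumes "u \<in> ext_h m" "x \<in> h m"
  shows "br u x \<in> ext_h m"
  by (rule br_ext_h_h_if_Circ[OF assms br_Circ_h[OF assms(2)]])

lemma br_Circ_ext_h:
  assumes "w \<in> ext_h m"
  shows "br (basis Circ) w \<in> ext_h m"
proof -
  obtain a b x where w: "w = scal a (basis Circ) + scal b (basis (Tr Lf)) + x" and x: "x \<in> h m"
    using assms by (rule ext_hE)
  have "br (basis Circ) w = scal b (basis Circ) + br (basis Circ) x"
    unfolding w using finite_supp_h[OF x]
    by (simp add: br_add_right br_scal_right finite_supp_add finite_supp_scal br_basis basic_br_def)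
  also have "\<dots> \<in> ext_h m"
    using x by (intro ext_h_add Circ_in_ext_h br_Circ_h)
  finally show ?thesis .
qed

lemma br_ext_h: "v \<in> ext_h m \<Longrightarrow> w \<in> ext_h m \<Longrightarrow> br v w \<in> ext_h m"
proof (rule br_ext_h_left)
  fix y assume "w \<in> ext_h m" "y \<in> h m"
  then have "scal (-1) (br w y) \<in> ext_h m"
    by (intro ext_h_scal br_ext_h_h)
  then show "br y w \<in> ext_h m"
    using br_antisym[of y w] \<open>w \<in> ext_h m\<close> \<open>y \<in> h m\<close> by (simp add: finite_supp_h finite_supp_ext_h)
qed (simp_all add: finite_supp_ext_h br_Circ_ext_h euler_ext_h)

theorem lemma5p4:
  fixes m :: nat
  assumes "2 \<le> m"
  shows "is_lie_subalgebra
           {scal a (basis Circ) + scal b (basis (Tr Lf)) + x | a b x. x \<in> h m}"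
  unfolding ext_h_def[symmetric] is_lie_subalgebra_def
  using finite_supp_ext_h h_subset_ext_h[OF h_closed(1)] ext_h_add ext_h_scal br_ext_h
  by blast

end
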